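(* Let $\mathcal A$ be a unital $C^*$-algebra and $\mathcal F\subseteq\mathcal A$ an algebra of finite type elements. An element $a\in\mathcal A$ is of Fredholm type if and only if $a$ is invertible modulo $\mathcal F$, i.e. there exist $b_1,b_2\in\mathcal A$ with $ab_1-1\in\mathcal F$ and $b_2a-1\in\mathcal F$.
   Context: Let $\mathcal A$ be a unital $C^*$-algebra. A subalgebra $\mathcal F\subseteq\mathcal A$ is an algebra of finite type elements if: (i) $\mathcal F$ is a self-adjoint two-sided ideal of $\mathcal A$; (ii) $\mathcal F$ has an approximate unit consisting of projections, i.e. a net $(p_\alpha)$ of projections in $\mathcal F$ with $\|f-p_\alpha f\|\to0$ and $\|f-fp_\alpha\|\to0$ for every $f\in\mathcal F$; (iii) for any projections $p,q\in\mathcal F$ there is $v\in\mathcal A$ with $vv^*=q$ and $v^*vp=0$. For $a\in\mathcal A$ and projections $p,q\in\mathcal A$, $a$ is invertible up to $(p,q)$ if there is $b\in\mathcal A$ with $b=(1-p)b(1-q)$, $(1-q)a(1-p)b=1-q$ and $b(1-q)a(1-p)=1-p$. $a$ is of Fredholm type if it is invertible up to $(p,q)$ for some projections $p,q\in\mathcal F$. *)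

theory Defs
  imports "HOL-Analysis.Analysis"
begin

text \<open>Unital C*-algebras: complete normed unital algebras (over the reals, as in the
library) carrying a compatible complex scalar multiplication and an involution
satisfying the C*-identity.\<close>

class cstar_algebra = real_normed_algebra_1 + banach +
  fixes scaleC :: "complex \<Rightarrow> 'a \<Rightarrow> 'a"
    and cstar :: "'a \<Rightarrow> 'a"
  assumes scaleC_of_real: "scaleC (complex_of_real r) x = scaleR r x"
    and scaleC_add_right: "scaleC c (x + y) = scaleC c x + scaleC c y"
    and scaleC_add_left: "scaleC (c + d) x = scaleC c x + scaleC d x"
    and scaleC_scaleC: "scaleC c (scaleC d x) = scaleC (c * d) x"
    and scaleC_one: "scaleC 1 x = x"
    and norm_scaleC: "norm (scaleC c x) = cmod c * norm x"
    and scaleC_mult_left: "scaleC c (x * y) = scaleC c x * y"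
    and scaleC_mult_right: "scaleC c (x * y) = x * scaleC c y"
    and cstar_cstar: "cstar (cstar x) = x"
    and cstar_add: "cstar (x + y) = cstar x + cstar y"
    and cstar_mult: "cstar (x * y) = cstar y * cstar x"
    and cstar_scaleC: "cstar (scaleC c x) = scaleC (cnj c) (cstar x)"
    and cstar_identity: "norm (cstar x * x) = (norm x)^2"

definition is_proj :: "'a::cstar_algebra \<Rightarrow> bool" where
  "is_proj p \<longleftrightarrow> p * p = p \<and> cstar p = p"

text \<open>Algebra of finite type elements. The approximate unit (a net of projections)
is expressed by a proper filter, Isabelle's standard notion of net.\<close>

definition finite_type_algebra :: "'a::cstar_algebra set \<Rightarrow> bool" where
  "finite_type_algebra F \<longleftrightarrow>
     \<comment> \<open>(i) self-adjoint two-sided ideal (in particular a complex subalgebra)\<close>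
     0 \<in> F \<and> (\<forall>x\<in>F. \<forall>y\<in>F. x + y \<in> F) \<and> (\<forall>c. \<forall>x\<in>F. scaleC c x \<in> F) \<and>
     (\<forall>a. \<forall>x\<in>F. a * x \<in> F \<and> x * a \<in> F) \<and> (\<forall>x\<in>F. cstar x \<in> F) \<and>
     \<comment> \<open>(ii) approximate unit of projections\<close>
     (\<exists>U :: 'a filter. U \<noteq> bot \<and> eventually (\<lambda>p. p \<in> F \<and> is_proj p) U \<and>
        (\<forall>f\<in>F. ((\<lambda>p. norm (f - p * f)) \<longlongrightarrow> 0) U \<and>
                 ((\<lambda>p. norm (f - f * p)) \<longlongrightarrow> 0) U)) \<and>
     \<comment> \<open>(iii)\<close>
     (\<forall>p q. p \<in> F \<and> is_proj p \<and> q \<in> F \<and> is_proj q \<longrightarrow>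
        (\<exists>v. v * cstar v = q \<and> cstar v * v * p = 0))"

definition invertible_upto :: "'a::cstar_algebra \<Rightarrow> 'a \<Rightarrow> 'a \<Rightarrow> bool" where
  "invertible_upto a p q \<longleftrightarrow>
     (\<exists>b. b = (1 - p) * b * (1 - q) \<and>
          (1 - q) * a * (1 - p) * b = 1 - q \<and>
          b * (1 - q) * a * (1 - p) = 1 - p)"

definition fredholm_type :: "'a::cstar_algebra set \<Rightarrow> 'a \<Rightarrow> bool" where
  "fredholm_type F a \<longleftrightarrow>
     (\<exists>p q. p \<in> F \<and> is_proj p \<and> q \<in> F \<and> is_proj q \<and> invertible_upto a p q)"

end

theory Submission
  imports Defs
begin

text \<open>
  If \<open>b a - 1 \<in> \<F>\<close>, pick a projection \<open>e\<close> of the approximate unit with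
  \<open>\<parallel>(b a - 1)(1 - e)\<parallel> < 1\<close>; a Neumann series then inverts \<open>(1 - e) b a (1 - e)\<close> on the
  corner \<open>1 - e\<close>, giving \<open>L = (1 - e) L\<close> with \<open>L a (1 - e) = 1 - e\<close>. The defect
  \<open>g = 1 - a L\<close> is an idempotent, and it lies in \<open>\<F>\<close> because \<open>b\<close> is also a right inverse of
  \<open>a\<close> modulo \<open>\<F>\<close>. Replacing \<open>g\<close> by the projection \<open>q\<close> onto its range (Kaplansky's
  formula) makes \<open>a\<close> invertible up to \<open>(e, q)\<close>.
\<close>

definition invertible_elem :: "'a::monoid_mult \<Rightarrow> bool" where
  "invertible_elem z \<longleftrightarrow> (\<exists>u. z * u = 1 \<and> u * z = 1)"

lemma invertible_elem_mult:
  assumes "invertible_elem x" "invertible_elem y"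
  shows "invertible_elem (x * y)"
proof -
  obtain u v where "x * u = 1" "u * x = 1" "y * v = 1" "v * y = 1"
    using assms unfolding invertible_elem_def by blast
  then have "x * y * (v * u) = 1" "v * u * (x * y) = 1"
    by (metis mult.assoc mult_1_left)+
  then show ?thesis unfolding invertible_elem_def by blast
qed

lemma invertible_elem_minus: "invertible_elem (x::'a::ring_1) \<Longrightarrow> invertible_elem (- x)"
  unfolding invertible_elem_def by (metis minus_mult_minus)

lemma inverse_commute:
  fixes z :: "'a::monoid_mult"
  assumes "z * u = 1" "u * z = 1" "z * x = x * z"
  shows "u * x = x * u"
proof -
  have "u * x = u * x * (z * u)" by (simp add: assms(1))
  also have "\<dots> = u * (z * x) * u" by (simp add: assms(3) mult.assoc)
  also have "\<dots> = x * u" by (simp add: assms(2) mult.assoc[symmetric])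
  finally show ?thesis .
qed

lemma invertible_elem_one_minus:
  fixes y :: "'a::{real_normed_algebra_1,banach}"
  assumes "norm y < 1"
  shows "invertible_elem (1 - y)"
proof -
  define s where "s = (\<Sum>n. y ^ n)"
  have geom: "(\<lambda>n. y ^ n) sums s"
    unfolding s_def using complete_algebra_summable_geometric[OF assms] by (rule summable_sums)
  have telescope: "(\<lambda>n. y ^ n - y ^ Suc n) sums 1"
    using telescope_sums'[OF LIMSEQ_power_zero[OF assms]] by simp
  have "(\<lambda>n. (1 - y) * y ^ n) = (\<lambda>n. y ^ n - y ^ Suc n)"
    by (simp add: algebra_simps)
  then have right: "(1 - y) * s = 1"
    using sums_mult[OF geom, of "1 - y"] telescope sums_unique2 by metis
  have "(\<lambda>n. y ^ n * (1 - y)) = (\<lambda>n. y ^ n - y ^ Suc n)"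
    by (simp add: algebra_simps power_commutes)
  then have left: "s * (1 - y) = 1"
    using sums_mult2[OF geom, of "1 - y"] telescope sums_unique2 by metis
  from right left show ?thesis unfolding invertible_elem_def by blast
qed

lemma invertible_elem_one_plus:
  fixes y :: "'a::{real_normed_algebra_1,banach}"
  shows "norm y < 1 \<Longrightarrow> invertible_elem (1 + y)"
  using invertible_elem_one_minus[of "- y"] by simp

lemma scaleC_zero_left [simp]: "scaleC 0 x = 0"
  using scaleC_of_real[of 0 x] by simp

lemma scaleC_minus_left: "scaleC (- c) x = - scaleC c x"
  using scaleC_add_left[of c "- c" x] by (simp add: eq_neg_iff_add_eq_0 add.commute)

lemma cstar_zero [simp]: "cstar 0 = (0::'a::cstar_algebra)"
  using cstar_add[of "0::'a" 0] by simp

lemma cstar_minus: "cstar (- x) = - cstar (x::'a::cstar_algebra)"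
  using cstar_add[of x "- x"] by (simp add: eq_neg_iff_add_eq_0 add.commute)

lemma cstar_diff: "cstar (x - y) = cstar x - cstar (y::'a::cstar_algebra)"
  using cstar_add[of x "- y"] cstar_minus[of y] by simp

lemma cstar_one [simp]: "cstar 1 = (1::'a::cstar_algebra)"
  by (metis cstar_cstar cstar_mult mult_1_right)

lemma cstar_scaleR: "cstar (scaleR r x) = scaleR r (cstar (x::'a::cstar_algebra))"
  by (metis cstar_scaleC scaleC_of_real complex_cnj_complex_of_real)

lemma is_proj_norm_le_one: "is_proj p \<Longrightarrow> norm p \<le> 1"
  using cstar_identity[of p] unfolding is_proj_def
  by (cases "norm p = 0") (auto simp: power2_eq_square)

lemma is_proj_one_minus: "is_proj p \<Longrightarrow> is_proj (1 - p)"
  unfolding is_proj_def by (simp add: cstar_diff algebra_simps)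

lemma invertible_elem_inverse_self_adjoint:
  fixes z :: "'a::cstar_algebra"
  assumes "cstar z = z" "z * u = 1" "u * z = 1"
  shows "cstar u = u"
proof -
  have "cstar u * z = 1" using assms(1,2) by (metis cstar_mult cstar_one)
  then have "cstar u * z * u = u" by simp
  then show ?thesis by (simp add: mult.assoc assms(2))
qed

definition imag_unit :: "'a::cstar_algebra" where
  "imag_unit = scaleC \<i> 1"

lemma imag_unit_commute: "imag_unit * x = x * (imag_unit::'a::cstar_algebra)"
  unfolding imag_unit_def by (metis mult_1_left mult_1_right scaleC_mult_left scaleC_mult_right)

lemma imag_unit_mult_self: "imag_unit * imag_unit = - (1::'a::cstar_algebra)"
proof -
  have "imag_unit * imag_unit = scaleC \<i> (imag_unit::'a)"
    unfolding imag_unit_def by (metis mult_1_left scaleC_mult_left)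
  also have "\<dots> = scaleC (- 1) 1"
    unfolding imag_unit_def by (simp add: scaleC_scaleC)
  finally show ?thesis by (simp add: scaleC_minus_left scaleC_one)
qed

lemma imag_unit_mult_imag_unit: "imag_unit * (imag_unit * x) = - (x::'a::cstar_algebra)"
  by (simp add: mult.assoc[symmetric] imag_unit_mult_self)

lemma cstar_imag_unit: "cstar imag_unit = - (imag_unit::'a::cstar_algebra)"
  unfolding imag_unit_def by (simp add: cstar_scaleC scaleC_minus_left)

lemma norm_imag_unit: "norm (imag_unit::'a::cstar_algebra) = 1"
  unfolding imag_unit_def by (simp add: norm_scaleC)

text \<open>
  With \<open>t = \<parallel>s\<parallel>\<^sup>2\<close> and \<open>x = s + t i\<close>, the C*-identity gives \<open>\<parallel>x\<parallel>\<^sup>2 = \<parallel>s\<^sup>2 + t\<^sup>2\<parallel> < (1 + t)\<^sup>2\<close>,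
  and \<open>s - i = - (1 + t) i (1 + i x / (1 + t))\<close> is a unit times a Neumann-invertible element.
\<close>

lemma invertible_elem_self_adjoint_minus_imag_unit:
  fixes s :: "'a::cstar_algebra"
  assumes "cstar s = s"
  shows "invertible_elem (s - imag_unit)"
proof -
  define t where "t = (norm s)\<^sup>2"
  define c where "c = 1 + t"
  define x where "x = s + scaleR t imag_unit"
  have t_nonneg: "t \<ge> 0" unfolding t_def by simp
  have c_pos: "c > 0" unfolding c_def using t_nonneg by simp
  have cstar_x: "cstar x = s - scaleR t imag_unit"
    unfolding x_def by (simp add: cstar_add cstar_scaleR assms cstar_imag_unit)
  have "cstar x * x = s * s + scaleR (t\<^sup>2) 1"
    unfolding cstar_x unfolding x_def
    by (simp add: algebra_simps imag_unit_commute[of s] imag_unit_mult_self power2_eq_square)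
  then have "(norm x)\<^sup>2 = norm (s * s + scaleR (t\<^sup>2) 1)"
    by (metis cstar_identity)
  also have "\<dots> \<le> norm (s * s) + t\<^sup>2"
    using norm_triangle_ineq[of "s * s" "scaleR (t\<^sup>2) 1"] by simp
  also have "\<dots> \<le> t + t\<^sup>2"
    using norm_mult_ineq[of s s] unfolding t_def by (simp add: power2_eq_square)
  also have "\<dots> < c\<^sup>2"
    unfolding c_def using t_nonneg by (simp add: power2_eq_square algebra_simps)
  finally have norm_x: "norm x < c"
    using c_pos by (smt (verit) norm_ge_zero power_mono)
  define y where "y = scaleR (1 / c) (imag_unit * x)"
  have norm_y: "norm y < 1"
    unfolding y_def using c_pos norm_x norm_mult_ineq[of imag_unit x]
    by (simp add: norm_imag_unit divide_simps)
  have "scaleR (- c) imag_unit * y = x"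
    unfolding y_def using c_pos by (simp add: imag_unit_mult_imag_unit)
  then have factor: "s - imag_unit = scaleR (- c) imag_unit * (1 + y)"
    unfolding x_def c_def by (simp add: algebra_simps)
  have "invertible_elem (scaleR (- c) (imag_unit::'a))"
    unfolding invertible_elem_def using c_pos
    by (intro exI[of _ "scaleR (1 / c) imag_unit"]) (simp add: imag_unit_mult_self)
  then show ?thesis
    unfolding factor using invertible_elem_mult invertible_elem_one_plus[OF norm_y] by blast
qed

lemma invertible_elem_one_minus_square_skew:
  fixes w :: "'a::cstar_algebra"
  assumes "cstar w = - w"
  shows "invertible_elem (1 - w * w)"
proof -
  define s where "s = imag_unit * w"
  have s_sa: "cstar s = s"
    unfolding s_def using assms by (simp add: cstar_mult cstar_imag_unit imag_unit_commute)
  then have "cstar (- s) = - s" by (simp add: cstar_minus)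
  from invertible_elem_minus[OF invertible_elem_self_adjoint_minus_imag_unit[OF this]]
  have "invertible_elem (s + imag_unit)" by (simp add: add.commute)
  moreover have "invertible_elem (s - imag_unit)"
    by (rule invertible_elem_self_adjoint_minus_imag_unit[OF s_sa])
  moreover have "s * s = - (w * w)"
    unfolding s_def by (metis imag_unit_commute imag_unit_mult_imag_unit mult.assoc)
  then have "(s + imag_unit) * (s - imag_unit) = 1 - w * w"
    by (simp add: algebra_simps imag_unit_commute[of s] imag_unit_mult_self)
  ultimately show ?thesis using invertible_elem_mult by metis
qed

text \<open>
  Kaplansky's formula: for an idempotent \<open>g\<close>, the element \<open>z = 1 - (g - g\<^sup>*)\<^sup>2\<close> is
  invertible, self-adjoint and commutes with \<open>g\<close> and \<open>g\<^sup>*\<close>, and \<open>q = g g\<^sup>* z\<^sup>-\<^sup>1\<close> is the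
  projection onto the range of \<open>g\<close>.
\<close>

lemma idempotent_range_projection:
  fixes g :: "'a::cstar_algebra"
  assumes idem: "g * g = g"
  shows "\<exists>q. is_proj q \<and> q * g = g \<and> g * q = q"
proof -
  define h where "h = cstar g"
  have h_idem: "h * h = h" unfolding h_def by (metis idem cstar_mult)
  have cstar_h: "cstar h = g" unfolding h_def by (rule cstar_cstar)
  have g_absorb: "g * (g * x) = g * x" for x by (simp add: mult.assoc[symmetric] idem)
  have h_absorb: "h * (h * x) = h * x" for x by (simp add: mult.assoc[symmetric] h_idem)
  define z where "z = 1 - (g - h) * (g - h)"
  have skew: "cstar (g - h) = - (g - h)" by (simp add: cstar_diff cstar_h h_def[symmetric])
  then obtain u where zu: "z * u = 1" and uz: "u * z = 1"
    using invertible_elem_one_minus_square_skew unfolding z_def invertible_elem_def by blast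
  have z_expand: "z = 1 - g - h + h * g + g * h"
    unfolding z_def by (simp add: algebra_simps idem h_idem)
  have gz: "g * z = g * h * g" and zg: "z * g = g * h * g"
    unfolding z_expand by (simp_all add: algebra_simps idem g_absorb)
  have hz: "h * z = h * g * h" and zh: "z * h = h * g * h"
    unfolding z_expand by (simp_all add: algebra_simps h_idem h_absorb)
  have ug: "u * g = g * u" using inverse_commute[OF zu uz] gz zg by simp
  have uh: "u * h = h * u" using inverse_commute[OF zu uz] hz zh by simp
  have "cstar z = z"
    unfolding z_def by (simp only: cstar_diff[of 1] cstar_mult cstar_one skew minus_mult_minus)
  then have cstar_u: "cstar u = u" using invertible_elem_inverse_self_adjoint zu uz by blast
  define q where "q = g * h * u"
  have qg: "q * g = g"
  proof -
    have "q * g = g * z * u" unfolding q_def by (simp add: mult.assoc ug gz)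
    then show ?thesis by (simp add: mult.assoc zu)
  qed
  have gq: "g * q = q" unfolding q_def by (simp add: mult.assoc g_absorb)
  have "q * q = q" by (metis gq qg mult.assoc)
  moreover have "cstar q = q"
    unfolding q_def by (simp add: cstar_mult cstar_u cstar_h h_def[symmetric] mult.assoc ug uh)
  ultimately show ?thesis using qg gq unfolding is_proj_def by blast
qed

lemma finite_type_algebra_mult_left: "finite_type_algebra F \<Longrightarrow> x \<in> F \<Longrightarrow> a * x \<in> F"
  unfolding finite_type_algebra_def by (elim conjE) blast

lemma finite_type_algebra_mult_right: "finite_type_algebra F \<Longrightarrow> x \<in> F \<Longrightarrow> x * a \<in> F"
  unfolding finite_type_algebra_def by (elim conjE) blast

lemma finite_type_algebra_add: "finite_type_algebra F \<Longrightarrow> x \<in> F \<Longrightarrow> y \<in> F \<Longrightarrow> x + y \<in> F"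
  unfolding finite_type_algebra_def by (elim conjE) blast

lemma finite_type_algebra_diff:
  assumes "finite_type_algebra F" "x \<in> F" "y \<in> F"
  shows "x - y \<in> F"
  using finite_type_algebra_add[OF assms(1,2) finite_type_algebra_mult_left[OF assms(1,3), of "- 1"]]
  by simp

lemma finite_type_algebra_right_approx_unit:
  assumes "finite_type_algebra F" "f \<in> F" "\<epsilon> > 0"
  obtains e where "e \<in> F" "is_proj e" "norm (f - f * e) < \<epsilon>"
proof -
  obtain U :: "'a filter" where "U \<noteq> bot" "eventually (\<lambda>p. p \<in> F \<and> is_proj p) U"
    and "((\<lambda>p. norm (f - f * p)) \<longlongrightarrow> 0) U"
    using assms(1,2) unfolding finite_type_algebra_def by (elim conjE) blast
  then have "eventually (\<lambda>p. (p \<in> F \<and> is_proj p) \<and> norm (f - f * p) < \<epsilon>) U"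
    using order_tendstoD(2) assms(3) eventually_conj by blast
  then show ?thesis using that eventually_happens' \<open>U \<noteq> bot\<close> by blast
qed

lemma left_inverse_mod_is_right_inverse_mod:
  assumes F: "finite_type_algebra F" and "a * b' - 1 \<in> F" "b * a - 1 \<in> F"
  shows "a * b - 1 \<in> F"
proof -
  have "a * b - 1 = (a * b' - 1) - a * b * (a * b' - 1) + a * (b * a - 1) * b'"
    by (simp add: algebra_simps)
  also have "\<dots> \<in> F"
    using assms(2,3) finite_type_algebra_mult_left[OF F] finite_type_algebra_mult_right[OF F]
    by (simp add: finite_type_algebra_add[OF F] finite_type_algebra_diff[OF F] mult.assoc)
  finally show ?thesis .
qed

lemma invertible_upto_imp_inverse_mod:
  assumes F: "finite_type_algebra F" and "p \<in> F" "q \<in> F" "is_proj p" "is_proj q"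
    and "invertible_upto a p q"
  shows "\<exists>b. a * b - 1 \<in> F \<and> b * a - 1 \<in> F"
proof -
  obtain b where b: "b = (1 - p) * b * (1 - q)"
    and right: "(1 - q) * a * (1 - p) * b = 1 - q" and left: "b * (1 - q) * a * (1 - p) = 1 - p"
    using assms(6) unfolding invertible_upto_def by blast
  have "(1 - p) * (1 - p) = 1 - p" "(1 - q) * (1 - q) = 1 - q"
    using assms(4,5) is_proj_one_minus unfolding is_proj_def by blast+
  then have Pb: "(1 - p) * b = b" and bQ: "b * (1 - q) = b"
    by (metis b mult.assoc)+
  have "a * b - 1 = ((1 - q) + q) * a * (1 - p) * b - 1"
    by (simp add: mult.assoc Pb)
  also have "\<dots> = q * (a * (1 - p) * b) - q"
    using right by (simp add: algebra_simps)
  finally have ab: "a * b - 1 \<in> F"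
    using finite_type_algebra_diff[OF F finite_type_algebra_mult_right[OF F assms(3)] assms(3)]
    by simp
  have "b * a - 1 = b * (1 - q) * a * ((1 - p) + p) - 1"
    by (simp add: bQ)
  also have "\<dots> = (b * (1 - q) * a) * p - p"
    using left by (simp add: algebra_simps)
  finally have "b * a - 1 \<in> F"
    using finite_type_algebra_diff[OF F finite_type_algebra_mult_left[OF F assms(2)] assms(2)]
    by simp
  with ab show ?thesis by blast
qed

lemma left_parametrix_on_corner:
  assumes F: "finite_type_algebra F" and "b * a - 1 \<in> F"
  obtains e L where "e \<in> F" "is_proj e" "(1 - e) * L = L" "L * a * (1 - e) = 1 - e"
proof -
  define f where "f = b * a - 1"
  have "f \<in> F" unfolding f_def by (rule assms(2))
  then obtain e where e: "e \<in> F" "is_proj e" and small: "norm (f - f * e) < 1"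
    by (rule finite_type_algebra_right_approx_unit[OF F _ zero_less_one])
  define P where "P = 1 - e"
  have "is_proj P" unfolding P_def by (rule is_proj_one_minus[OF e(2)])
  then have PP: "P * P = P" and norm_P: "norm P \<le> 1"
    using is_proj_norm_le_one unfolding is_proj_def by blast+
  have "e * e = e" using e(2) unfolding is_proj_def by blast
  then have Pe: "P * e = 0" unfolding P_def by (simp add: algebra_simps)
  define y where "y = P * f * P"
  have "norm y \<le> norm P * norm (f * P)"
    unfolding y_def using norm_mult_ineq[of P "f * P"] by (simp add: mult.assoc)
  also have "\<dots> \<le> norm (f * P)" using norm_P by (simp add: mult_left_le_one_le)
  also have "f * P = f - f * e" unfolding P_def by (simp add: algebra_simps)
  finally have "norm y < 1" using small by simp
  then obtain z where z: "z * (1 + y) = 1"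
    using invertible_elem_one_plus unfolding invertible_elem_def by blast
  have "(1 + y) * e = e" unfolding y_def by (simp add: distrib_right mult.assoc Pe)
  then have ze: "z * e = e" by (metis z mult.assoc mult_1_left)
  define L where "L = P * z * P * b"
  have "P * (b * a) * P = P + y"
    unfolding y_def f_def by (simp add: algebra_simps PP)
  then have "L * a * P = P * z * (P + y)"
    unfolding L_def by (simp add: mult.assoc)
  also have "P + y = (1 + y) - e" unfolding P_def by simp
  also have "P * z * ((1 + y) - e) = P * (z * (1 + y)) - P * (z * e)"
    by (simp add: right_diff_distrib mult.assoc)
  also have "\<dots> = P" by (simp add: z ze Pe)
  finally have "L * a * P = P" .
  moreover have "P * L = L" unfolding L_def by (simp add: mult.assoc[symmetric] PP)
  ultimately show ?thesis using that e unfolding P_def by blast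
qed

lemma corner_parametrix_absorb:
  fixes a e L :: "'a::ring_1"
  assumes "(1 - e) * L = L" "L * a * (1 - e) = 1 - e"
  shows "L * (a * L) = L"
  using assms by (metis mult.assoc)

lemma invertible_upto_by_range_projection:
  fixes a e L q :: "'a::cstar_algebra"
  defines "g \<equiv> 1 - a * L"
  assumes PL: "(1 - e) * L = L" and LaP: "L * a * (1 - e) = 1 - e" and q: "is_proj q"
    and qg: "q * g = g" and gq: "g * q = q"
  shows "invertible_upto a e q"
  unfolding invertible_upto_def
proof (intro exI[of _ "L * (1 - q)"] conjI)
  define P Q where "P = 1 - e" and "Q = 1 - q"
  have QQ: "Q * Q = Q" using is_proj_one_minus[OF q] unfolding Q_def is_proj_def by blast
  have aPL: "a * P * L = 1 - g" unfolding g_def P_def by (simp add: mult.assoc PL)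
  have Qg: "Q * g = 0" unfolding Q_def by (simp add: left_diff_distrib qg)
  have Lg: "L * g = 0"
    unfolding g_def using corner_parametrix_absorb[OF PL LaP] by (simp add: right_diff_distrib)
  have "P * (L * Q) * Q = (P * L) * (Q * Q)" by (simp only: mult.assoc)
  then show "L * (1 - q) = (1 - e) * (L * (1 - q)) * (1 - q)"
    using PL QQ unfolding P_def Q_def by simp
  have "Q * a * P * (L * Q) = Q * (a * P * L) * Q" by (simp only: mult.assoc)
  also have "\<dots> = Q * Q - Q * g * Q" by (simp add: aPL right_diff_distrib left_diff_distrib)
  finally show "(1 - q) * a * (1 - e) * (L * (1 - q)) = 1 - q"
    using QQ Qg unfolding P_def Q_def by simp
  have "L * Q * Q * a * P = L * a * P - (L * g) * q * a * P"
    using QQ gq unfolding Q_def by (simp add: mult.assoc right_diff_distrib left_diff_distrib)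
  then show "L * (1 - q) * (1 - q) * a * (1 - e) = 1 - e"
    using LaP Lg unfolding P_def Q_def by simp
qed

lemma corner_defect_idempotent:
  fixes a e L :: "'a::ring_1"
  assumes "(1 - e) * L = L" "L * a * (1 - e) = 1 - e"
  shows "(1 - a * L) * (1 - a * L) = 1 - a * L"
  using corner_parametrix_absorb[OF assms]
  by (simp add: right_diff_distrib left_diff_distrib mult.assoc)

lemma corner_defect_mem:
  assumes F: "finite_type_algebra F" and "a * b - 1 \<in> F" "e \<in> F"
    and LaP: "L * a * (1 - e) = 1 - e"
  shows "1 - a * L \<in> F"
proof -
  define g where "g = 1 - a * L"
  have "g * a * (1 - e) = 0"
    unfolding g_def using LaP by (simp add: left_diff_distrib mult.assoc)
  then have ga: "g * a = g * a * e" by (simp add: right_diff_distrib)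
  have "g = g * (a * b) - g * (a * b - 1)" by (simp add: right_diff_distrib)
  also have "\<dots> = g * a * e * b - g * (a * b - 1)" by (metis ga mult.assoc)
  also have "\<dots> \<in> F"
    using finite_type_algebra_diff[OF F
        finite_type_algebra_mult_right[OF F finite_type_algebra_mult_left[OF F assms(3), of "g * a"]]
        finite_type_algebra_mult_left[OF F assms(2), of g]] .
  finally show ?thesis unfolding g_def .
qed

lemma fredholm_type_of_corner_parametrix:
  assumes F: "finite_type_algebra F" and "a * b - 1 \<in> F" "e \<in> F" "is_proj e"
    and PL: "(1 - e) * L = L" and LaP: "L * a * (1 - e) = 1 - e"
  shows "fredholm_type F a"
proof -
  define g where "g = 1 - a * L"
  obtain q where q: "is_proj q" and qg: "q * g = g" and gq: "g * q = q"
    using idempotent_range_projection corner_defect_idempotent[OF PL LaP] unfolding g_def by blast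
  have "g \<in> F" unfolding g_def using corner_defect_mem[OF F assms(2,3) LaP] .
  then have "q \<in> F" using finite_type_algebra_mult_right[OF F, of g q] gq by simp
  moreover have "invertible_upto a e q"
    using invertible_upto_by_range_projection[OF PL LaP q] qg gq unfolding g_def .
  ultimately show ?thesis using assms(3,4) q unfolding fredholm_type_def by blast
qed

theorem mainTheorem5:
  fixes F :: "'a::cstar_algebra set" and a :: 'a
  assumes "finite_type_algebra F"
  shows "fredholm_type F a \<longleftrightarrow> (\<exists>b1 b2. a * b1 - 1 \<in> F \<and> b2 * a - 1 \<in> F)"
proof
  assume "fredholm_type F a"
  then show "\<exists>b1 b2. a * b1 - 1 \<in> F \<and> b2 * a - 1 \<in> F"
    using invertible_upto_imp_inverse_mod[OF assms] unfolding fredholm_type_def by blast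
next
  assume "\<exists>b1 b2. a * b1 - 1 \<in> F \<and> b2 * a - 1 \<in> F"
  then obtain b' b where "a * b' - 1 \<in> F" and left: "b * a - 1 \<in> F" by blast
  then have right: "a * b - 1 \<in> F" by (rule left_inverse_mod_is_right_inverse_mod[OF assms])
  obtain e L where "e \<in> F" "is_proj e" "(1 - e) * L = L" "L * a * (1 - e) = 1 - e"
    using left_parametrix_on_corner[OF assms left] .
  then show "fredholm_type F a" by (rule fredholm_type_of_corner_parametrix[OF assms right])
qed

end
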